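(* Let $f:[0,1]\to(0,\infty)$ be a continuous completely non-Hölder function. Let $\mathcal{A}\subseteq C^0([0,1])$ be the (not necessarily unital) real algebra generated by $\{f^\lambda:\lambda>0\}$, i.e. the set of finite linear combinations of finite products of the functions $f^\lambda$, $\lambda>0$. Then $\mathcal{A}$ has dimension $2^{\aleph_0}$ as a real vector space, and no non-zero element of $\mathcal{A}$ has a finite one-sided derivative at any point of $[0,1]$.
   Context: For $\alpha>0$, a function $g:[0,1]\to\mathbb{R}$ is called $\alpha$-Hölder at $x_0$ from the right if $\limsup_{y\searrow x_0}\frac{|g(y)-g(x_0)|}{|y-x_0|^\alpha}<\infty$, and $\alpha$-Hölder at $x_0$ from the left if $\limsup_{y\nearrow x_0}\frac{|g(y)-g(x_0)|}{|y-x_0|^\alpha}<\infty$. The function $g$ is called completely non-Hölder if there is no $x_0\in[0,1]$ and no $\alpha>0$ such that $g$ is $\alpha$-Hölder at $x_0$ from the left or from the right. *)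

theory Defs
  imports "HOL-Analysis.Analysis" "HOL-Library.Equipollence" "HOL-Library.Function_Algebras"
begin

text \<open>Functions on [0,1] are represented as functions real => real; only values on
  [0,1] matter.  alpha-Hoelder from the right at x0 (for x0 < 1) and from the left at x0
  (for x0 > 0), with y ranging over [0,1], via the library Limsup on extended reals.\<close>

definition holder_right :: "real \<Rightarrow> (real \<Rightarrow> real) \<Rightarrow> real \<Rightarrow> bool" where
  "holder_right \<alpha> g x0 \<longleftrightarrow>
     Limsup (at x0 within {x0<..1}) (\<lambda>y. ereal (\<bar>g y - g x0\<bar> / \<bar>y - x0\<bar> powr \<alpha>)) < \<infinity>"

definition holder_left :: "real \<Rightarrow> (real \<Rightarrow> real) \<Rightarrow> real \<Rightarrow> bool" where
  "holder_left \<alpha> g x0 \<longleftrightarrow>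
     Limsup (at x0 within {0..<x0}) (\<lambda>y. ereal (\<bar>g y - g x0\<bar> / \<bar>y - x0\<bar> powr \<alpha>)) < \<infinity>"

definition completely_non_holder :: "(real \<Rightarrow> real) \<Rightarrow> bool" where
  "completely_non_holder g \<longleftrightarrow>
     \<not> (\<exists>x0\<in>{0..1}. \<exists>\<alpha>>0.
          (x0 < 1 \<and> holder_right \<alpha> g x0) \<or> (0 < x0 \<and> holder_left \<alpha> g x0))"

definition fpow :: "(real \<Rightarrow> real) \<Rightarrow> real \<Rightarrow> real \<Rightarrow> real" where
  "fpow f l = (\<lambda>x. if x \<in> {0..1} then f x powr l else 0)"

inductive_set gen_algebra :: "(real \<Rightarrow> real) set \<Rightarrow> (real \<Rightarrow> real) set"
  for G :: "(real \<Rightarrow> real) set" where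
  gen: "g \<in> G \<Longrightarrow> g \<in> gen_algebra G"
| add: "g \<in> gen_algebra G \<Longrightarrow> h \<in> gen_algebra G \<Longrightarrow> (\<lambda>x. g x + h x) \<in> gen_algebra G"
| scale: "g \<in> gen_algebra G \<Longrightarrow> (\<lambda>x. c * g x) \<in> gen_algebra G"
| mult: "g \<in> gen_algebra G \<Longrightarrow> h \<in> gen_algebra G \<Longrightarrow> (\<lambda>x. g x * h x) \<in> gen_algebra G"

definition fscale :: "real \<Rightarrow> (real \<Rightarrow> real) \<Rightarrow> real \<Rightarrow> real" where
  "fscale c g = (\<lambda>x. c * g x)"

end

theory Submission
  imports Defs
begin

text \<open>Since f is positive and not constant, the powers f^\<lambda> (\<lambda> > 0) are pairwise distinct and
  closed under multiplication, so they span the algebra; on [0,1] every element of the algebra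
  has the form P \<circ> f with P(t) = \<Sum> c_\<lambda> t^\<lambda> a finite sum of real powers.  Such a P,
  if not identically zero, vanishes only to finite order at every t0 > 0:
  |P t - P t0| \<ge> C |t - t0|^n near t0.  This is proved by induction on the number of terms:
  dividing by one power and differentiating removes a term, and the Cauchy mean value theorem
  integrates the lower bound back.  Since the range of f contains an interval, this gives linear
  independence of the powers; and a one-sided derivative of P \<circ> f at x0 makes it one-sided
  Lipschitz there, which by the lower bound forces f to be one-sided Hoelder of exponent 1/n
  at x0.\<close>

section \<open>Sums of real powers\<close>

definition powr_sum :: "('i \<Rightarrow> real) \<Rightarrow> ('i \<Rightarrow> real) \<Rightarrow> 'i set \<Rightarrow> real \<Rightarrow> real" where
  "powr_sum c e I = (\<lambda>t. \<Sum>i\<in>I. c i * t powr e i)"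

lemma isCont_powr_sum: "t > 0 \<Longrightarrow> isCont (powr_sum c e I) t"
  unfolding powr_sum_def by (intro continuous_intros) auto

lemma has_real_derivative_powr_sum:
  "z > 0 \<Longrightarrow> (powr_sum c e I has_real_derivative powr_sum (\<lambda>i. c i * e i) (\<lambda>i. e i - 1) I z) (at z)"
  unfolding powr_sum_def by (auto intro!: derivative_eq_intros sum.cong simp: mult.assoc)

lemma powr_sum_remove:
  "finite I \<Longrightarrow> i \<in> I \<Longrightarrow> powr_sum c e I t = c i * t powr e i + powr_sum c e (I - {i}) t"
  unfolding powr_sum_def by (simp add: sum.remove)

lemma powr_sum_shift:
  "t > 0 \<Longrightarrow> powr_sum c e I t = t powr a * powr_sum c (\<lambda>i. e i - a) I t"
  unfolding powr_sum_def sum_distrib_left by (intro sum.cong) (auto simp: powr_add[symmetric])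

lemma eventually_lower_bound_nonzero:
  fixes h :: "real \<Rightarrow> real"
  assumes "isCont h t0" "h t0 \<noteq> 0"
  shows "eventually (\<lambda>t. \<bar>h t0\<bar> / 2 \<le> \<bar>h t\<bar>) (at t0)"
proof -
  have "((\<lambda>t. \<bar>h t\<bar>) \<longlongrightarrow> \<bar>h t0\<bar>) (at t0)"
    using assms(1) by (intro tendsto_rabs) (simp add: isCont_def)
  then have "eventually (\<lambda>t. \<bar>h t\<bar> > \<bar>h t0\<bar> / 2) (at t0)"
    using assms(2) by (intro order_tendstoD) auto
  then show ?thesis by eventually_elim auto
qed

lemma antiderivative_lower_bound:
  fixes g G :: "real \<Rightarrow> real"
  assumes g0: "g t0 = 0"
    and deriv: "eventually (\<lambda>z. (g has_real_derivative G z) (at z)) (nhds t0)"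
    and bound: "eventually (\<lambda>t. C * \<bar>t - t0\<bar>^k \<le> \<bar>G t\<bar>) (at t0)"
  shows "eventually (\<lambda>t. C / Suc k * \<bar>t - t0\<bar>^Suc k \<le> \<bar>g t\<bar>) (at t0)"
proof -
  have "eventually (\<lambda>z. (g has_real_derivative G z) (at z) \<and> (z \<noteq> t0 \<longrightarrow> C * \<bar>z - t0\<bar>^k \<le> \<bar>G z\<bar>)) (nhds t0)"
    using deriv bound unfolding eventually_at_filter by eventually_elim auto
  then obtain \<delta> where "\<delta> > 0"
    and deriv_\<delta>: "\<And>z. \<bar>z - t0\<bar> < \<delta> \<Longrightarrow> (g has_real_derivative G z) (at z)"
    and bound_\<delta>: "\<And>z. \<bar>z - t0\<bar> < \<delta> \<Longrightarrow> z \<noteq> t0 \<Longrightarrow> C * \<bar>z - t0\<bar>^k \<le> \<bar>G z\<bar>"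
    unfolding eventually_nhds_metric dist_real_def by blast
  have "C / Suc k * \<bar>t - t0\<bar>^Suc k \<le> \<bar>g t\<bar>" if t: "t \<noteq> t0" "\<bar>t - t0\<bar> < \<delta>" for t
  proof -
    define \<phi> where "\<phi> s = (s - t0)^Suc k" for s
    define a b where "a = min t t0" and "b = max t t0"
    have near: "\<bar>z - t0\<bar> < \<delta>" if "a \<le> z" "z \<le> b" for z
      using that t unfolding a_def b_def by linarith
    have d\<phi>: "(\<phi> has_real_derivative Suc k * (z - t0)^k) (at z)" for z
      unfolding \<phi>_def by (rule derivative_eq_intros refl | simp)+
    have "\<exists>\<xi>. a < \<xi> \<and> \<xi> < b \<and> (g b - g a) * (Suc k * (\<xi> - t0)^k) = (\<phi> b - \<phi> a) * G \<xi>"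
    proof (rule GMVT')
      show "a < b"
        using t by (simp add: a_def b_def)
      show "isCont g z" if "a \<le> z" "z \<le> b" for z
        using deriv_\<delta>[OF near[OF that]] by (rule DERIV_isCont)
      show "(g has_real_derivative G z) (at z)" if "a < z" "z < b" for z
        using that by (intro deriv_\<delta> near) auto
      show "isCont \<phi> z" for z
        using d\<phi> by (rule DERIV_isCont)
    qed (rule d\<phi>)
    then obtain \<xi> where \<xi>: "a < \<xi>" "\<xi> < b"
      and mvt: "(g b - g a) * (Suc k * (\<xi> - t0)^k) = (\<phi> b - \<phi> a) * G \<xi>"
      by blast
    have \<xi>_near: "\<xi> \<noteq> t0" "\<bar>\<xi> - t0\<bar> < \<delta>"
      using \<xi> near[of \<xi>] unfolding a_def b_def by auto
    \<comment> \<open>{a, b} = {t, t0} and both g and \<phi> vanish at t0, so the sign of the MVT identity is immaterial\<close>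
    have mvt_abs: "\<bar>t - t0\<bar>^Suc k * \<bar>G \<xi>\<bar> = \<bar>g t\<bar> * Suc k * \<bar>\<xi> - t0\<bar>^k"
      using arg_cong[OF mvt, of abs] g0
      by (cases "t < t0") (auto simp: a_def b_def \<phi>_def abs_mult power_abs abs_minus_commute)
    have "C * \<bar>t - t0\<bar>^Suc k * \<bar>\<xi> - t0\<bar>^k \<le> \<bar>t - t0\<bar>^Suc k * \<bar>G \<xi>\<bar>"
      using mult_left_mono[OF bound_\<delta>[OF \<xi>_near(2,1)], of "\<bar>t - t0\<bar>^Suc k"] by (simp add: ac_simps)
    then have "C * \<bar>t - t0\<bar>^Suc k \<le> \<bar>g t\<bar> * Suc k"
      unfolding mvt_abs by (rule mult_right_le_imp_le) (use \<xi>_near in simp)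
    then show ?thesis
      by (simp add: field_simps)
  qed
  then show ?thesis
    unfolding eventually_at dist_real_def using \<open>\<delta> > 0\<close> by blast
qed

lemma powr_sum_lower_bound_from_derivative:
  assumes I: "finite I" "j \<in> I" and zero: "powr_sum c e I t0 = 0" and t0: "t0 > 0"
    and G_bound: "eventually (\<lambda>t. C * \<bar>t - t0\<bar>^k
        \<le> \<bar>powr_sum (\<lambda>i. c i * (e i - e j)) (\<lambda>i. e i - e j - 1) (I - {j}) t\<bar>) (at t0)"
    and "C > 0"
  shows "eventually (\<lambda>t. t0 powr e j / 2 * (C / Suc k) * \<bar>t - t0\<bar>^Suc k \<le> \<bar>powr_sum c e I t\<bar>) (at t0)"
proof -
  \<comment> \<open>Differentiating t^(-e j) times the sum kills the term j.\<close>
  define g where "g = powr_sum c (\<lambda>i. e i - e j) I"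
  define G where "G = powr_sum (\<lambda>i. c i * (e i - e j)) (\<lambda>i. e i - e j - 1) (I - {j})"
  have "eventually (\<lambda>z. z \<in> {0<..}) (nhds t0)"
    using t0 by (intro eventually_nhds_in_open) auto
  then have "eventually (\<lambda>z. (g has_real_derivative G z) (at z)) (nhds t0)"
  proof eventually_elim
    case (elim z)
    then show ?case
      using has_real_derivative_powr_sum[of z c "\<lambda>i. e i - e j" I]
        powr_sum_remove[OF I, of "\<lambda>i. c i * (e i - e j)"]
      by (simp add: g_def G_def)
  qed
  moreover have "g t0 = 0"
    using zero t0 powr_sum_shift[OF t0, of c e I "e j"] by (simp add: g_def)
  ultimately have g_bound: "eventually (\<lambda>t. C / Suc k * \<bar>t - t0\<bar>^Suc k \<le> \<bar>g t\<bar>) (at t0)"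
    using G_bound unfolding G_def by (intro antiderivative_lower_bound)
  have "eventually (\<lambda>t. \<bar>t0 powr e j\<bar> / 2 \<le> \<bar>t powr e j\<bar>) (at t0)"
    using t0 by (intro eventually_lower_bound_nonzero continuous_intros) auto
  moreover have "eventually (\<lambda>t. t > 0) (at t0)"
    using order_tendstoD(1)[OF tendsto_ident_at t0] by simp
  ultimately show ?thesis
    using g_bound
  proof eventually_elim
    case (elim t)
    have "t0 powr e j / 2 * (C / Suc k * \<bar>t - t0\<bar>^Suc k) \<le> t powr e j * \<bar>g t\<bar>"
      using elim \<open>C > 0\<close> by (intro mult_mono) auto
    also have "\<dots> = \<bar>powr_sum c e I t\<bar>"
      using powr_sum_shift[OF \<open>t > 0\<close>, of c e I "e j"] by (simp add: g_def abs_mult)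
    finally show ?case
      by (simp add: ac_simps)
  qed
qed

lemma powr_sum_lower_bound:
  assumes "finite I" "inj_on e I" "\<exists>i\<in>I. c i \<noteq> 0" "t0 > 0"
  shows "\<exists>k C. C > 0 \<and> eventually (\<lambda>t. C * \<bar>t - t0\<bar>^k \<le> \<bar>powr_sum c e I t\<bar>) (at t0)"
  using assms
proof (induction "card I" arbitrary: I c e rule: less_induct)
  case less
  note t0 = \<open>t0 > 0\<close>
  show ?case
  proof (cases "powr_sum c e I t0 = 0")
    case False
    then show ?thesis
      using eventually_lower_bound_nonzero[OF isCont_powr_sum[OF t0] False]
      by (intro exI[of _ 0] exI[of _ "\<bar>powr_sum c e I t0\<bar> / 2"]) auto
  next
    case True
    obtain j where j: "j \<in> I" "c j \<noteq> 0"
      using less.prems by auto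
    \<comment> \<open>A single nonzero term cannot vanish at t0 > 0.\<close>
    have "\<exists>i\<in>I - {j}. c i \<noteq> 0"
    proof (rule ccontr)
      assume "\<not> ?thesis"
      then have "powr_sum c e (I - {j}) t0 = 0"
        by (simp add: powr_sum_def)
      then show False
        using True j t0 powr_sum_remove[OF less.prems(1) j(1), of c e t0] by simp
    qed
    then obtain i where i: "i \<in> I - {j}" "c i \<noteq> 0" ..
    have "\<exists>k C. C > 0 \<and> eventually (\<lambda>t. C * \<bar>t - t0\<bar>^k
        \<le> \<bar>powr_sum (\<lambda>i. c i * (e i - e j)) (\<lambda>i. e i - e j - 1) (I - {j}) t\<bar>) (at t0)"
    proof (rule less.hyps)
      show "card (I - {j}) < card I"
        using less.prems(1) j(1) by (rule card_Diff1_less)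
      show "inj_on (\<lambda>i. e i - e j - 1) (I - {j})"
        using less.prems(2) by (auto simp: inj_on_def)
      show "\<exists>i\<in>I - {j}. c i * (e i - e j) \<noteq> 0"
        using i j less.prems(2) by (intro bexI[OF _ i(1)]) (auto dest: inj_onD)
    qed (use less.prems in auto)
    then obtain k C where "C > 0" and "eventually (\<lambda>t. C * \<bar>t - t0\<bar>^k
        \<le> \<bar>powr_sum (\<lambda>i. c i * (e i - e j)) (\<lambda>i. e i - e j - 1) (I - {j}) t\<bar>) (at t0)"
      by blast
    then have "eventually (\<lambda>t. t0 powr e j / 2 * (C / Suc k) * \<bar>t - t0\<bar>^Suc k \<le> \<bar>powr_sum c e I t\<bar>) (at t0)"
      using less.prems(1) j(1) True t0 by (intro powr_sum_lower_bound_from_derivative)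
    then show ?thesis
      using \<open>C > 0\<close> t0 by (intro exI[of _ "Suc k"] exI[of _ "t0 powr e j / 2 * (C / Suc k)"]) auto
  qed
qed

lemma powr_sum_not_eventually_zero:
  assumes "finite S" "\<exists>l\<in>S. c l \<noteq> 0" "t0 > 0"
  shows "\<not> eventually (\<lambda>t. powr_sum c id S t = 0) (at t0)"
proof
  assume zero: "eventually (\<lambda>t. powr_sum c id S t = 0) (at t0)"
  obtain k C where "C > 0" and bound: "eventually (\<lambda>t. C * \<bar>t - t0\<bar>^k \<le> \<bar>powr_sum c id S t\<bar>) (at t0)"
    using powr_sum_lower_bound[of S id c t0] assms by auto
  have "eventually (\<lambda>t::real. False) (at t0)"
    using zero bound eventually_neq_at_within[of t0 t0 UNIV]
    by eventually_elim (use \<open>C > 0\<close> in \<open>auto simp: mult_le_0_iff power_le_zero_eq\<close>)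
  then show False
    by simp
qed

lemma powr_sum_deviation_lower_bound:
  assumes "finite S" "S \<subseteq> {0<..}" "\<exists>l\<in>S. c l \<noteq> 0" "t0 > 0"
  obtains n C where "n > 0" "C > 0"
    "eventually (\<lambda>t. C * \<bar>t - t0\<bar>^n \<le> \<bar>powr_sum c id S t - powr_sum c id S t0\<bar>) (nhds t0)"
proof -
  define P where "P = powr_sum c id S"
  \<comment> \<open>P - P t0 is again a sum of powers, with the constant term t^0 added.\<close>
  define c' where "c' = c(0 := - P t0)"
  have "0 \<notin> S"
    using assms(2) by auto
  have "powr_sum c' id S = P"
    unfolding P_def powr_sum_def c'_def using \<open>0 \<notin> S\<close> by (intro ext sum.cong) auto
  have c'_0: "c' 0 = - P t0"
    by (simp add: c'_def)
  have P_dev: "powr_sum c' id (insert 0 S) t = P t - P t0" if "t > 0" for t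
  proof -
    have "powr_sum c' id (insert 0 S) t = c' 0 * t powr id 0 + powr_sum c' id (insert 0 S - {0}) t"
      using assms(1) by (intro powr_sum_remove) auto
    also have "insert 0 S - {0} = S"
      using \<open>0 \<notin> S\<close> by auto
    finally show ?thesis
      using that \<open>powr_sum c' id S = P\<close> c'_0 by (simp add: id_def)
  qed
  obtain l where "l \<in> S" "c l \<noteq> 0"
    using assms(3) by blast
  then have "c' l \<noteq> 0"
    using \<open>0 \<notin> S\<close> by (auto simp: c'_def)
  then have "\<exists>l\<in>insert 0 S. c' l \<noteq> 0"
    using \<open>l \<in> S\<close> by blast
  then obtain k C where "C > 0"
    and bound: "eventually (\<lambda>t. C * \<bar>t - t0\<bar>^k \<le> \<bar>powr_sum c' id (insert 0 S) t\<bar>) (at t0)"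
    using powr_sum_lower_bound[OF finite.insertI[OF assms(1)] inj_on_id _ assms(4)] by blast
  \<comment> \<open>Raising the exponent by one (valid for |t - t0| < 1) makes it positive and lets the bound
    hold at t0 itself.\<close>
  have "eventually (\<lambda>t. t > 0 \<and> \<bar>t - t0\<bar> < 1) (nhds t0)"
    using eventually_nhds_in_open[of "{max 0 (t0 - 1)<..<t0 + 1}" t0] assms(4)
    by (auto elim!: eventually_mono)
  then have "eventually (\<lambda>t. C * \<bar>t - t0\<bar>^Suc k \<le> \<bar>P t - P t0\<bar>) (nhds t0)"
    using bound unfolding eventually_at_filter
  proof eventually_elim
    case (elim t)
    have "C * \<bar>t - t0\<bar>^Suc k \<le> C * \<bar>t - t0\<bar>^k"
      using elim \<open>C > 0\<close> by (intro mult_left_mono) (auto simp: mult_left_le_one_le)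
    then show ?case
      using elim P_dev by (cases "t = t0") auto
  qed
  then show ?thesis
    using that \<open>C > 0\<close> unfolding P_def by blast
qed

section \<open>The algebra generated by the powers of f\<close>

interpretation fun_space: module fscale
  by unfold_locales (auto simp: fscale_def fun_eq_iff algebra_simps)

lemma subspace_mult_preimage:
  assumes "fun_space.subspace V"
  shows "fun_space.subspace {g. (\<lambda>x. g x * h x) \<in> V}"
proof -
  have "(\<lambda>x. (g + g') x * h x) = (\<lambda>x. g x * h x) + (\<lambda>x. g' x * h x)" for g g'
    by (simp add: fun_eq_iff algebra_simps)
  moreover have "(\<lambda>x. fscale a g x * h x) = fscale a (\<lambda>x. g x * h x)" for a g
    by (simp add: fscale_def fun_eq_iff)
  moreover have "(\<lambda>x. 0 x * h x) = 0"
    by (simp add: fun_eq_iff)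
  ultimately show ?thesis
    using assms unfolding fun_space.subspace_def by simp
qed

lemma span_mult_closed:
  assumes G_mult: "\<And>g h. g \<in> G \<Longrightarrow> h \<in> G \<Longrightarrow> (\<lambda>x. g x * h x) \<in> G"
    and g: "g \<in> fun_space.span G" and h: "h \<in> fun_space.span G"
  shows "(\<lambda>x. g x * h x) \<in> fun_space.span G"
proof -
  have span_times_G: "(\<lambda>x. g' x * h' x) \<in> fun_space.span G" if "g' \<in> fun_space.span G" "h' \<in> G" for g' h'
    using that(1) fun_space.subspace_span[THEN subspace_mult_preimage]
    by (rule fun_space.span_induct) (auto intro: fun_space.span_base G_mult that(2))
  have "(\<lambda>x. h x * g x) \<in> fun_space.span G"
    using h fun_space.subspace_span[THEN subspace_mult_preimage]
  proof (rule fun_space.span_induct)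
    show "(\<lambda>x. h' x * g x) \<in> fun_space.span G" if "h' \<in> G" for h'
      using span_times_G[OF g that] by (simp add: mult.commute)
  qed
  then show ?thesis
    by (simp add: mult.commute)
qed

lemma gen_algebra_eq_span:
  assumes "G \<noteq> {}" and G_mult: "\<And>g h. g \<in> G \<Longrightarrow> h \<in> G \<Longrightarrow> (\<lambda>x. g x * h x) \<in> G"
  shows "gen_algebra G = fun_space.span G"
proof
  show "gen_algebra G \<subseteq> fun_space.span G"
  proof
    fix g
    assume "g \<in> gen_algebra G"
    then show "g \<in> fun_space.span G"
    proof induction
      case (gen g)
      then show ?case by (rule fun_space.span_base)
    next
      case (add g h)
      then show ?case using fun_space.span_add by (simp add: func_plus)
    next
      case (scale g c)
      then show ?case using fun_space.span_scale[of g G c] by (simp only: fscale_def[of c g])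
    next
      case (mult g h)
      then show ?case using G_mult by (intro span_mult_closed)
    qed
  qed
next
  obtain g0 where "g0 \<in> G"
    using assms(1) by blast
  then have "(\<lambda>x. 0 * g0 x) \<in> gen_algebra G"
    by (intro gen_algebra.scale gen_algebra.gen)
  then have "fun_space.subspace (gen_algebra G)"
    unfolding fun_space.subspace_def
    by (auto simp: fscale_def func_plus func_zero intro: gen_algebra.add gen_algebra.scale)
  then show "fun_space.span G \<subseteq> gen_algebra G"
    by (intro fun_space.span_minimal) (auto intro: gen_algebra.gen)
qed

lemma sum_fun_apply: "(\<Sum>i\<in>I. F i) x = (\<Sum>i\<in>I. F i x)"
  by (induction I rule: infinite_finite_induct) auto

lemma fpow_mult:
  assumes "\<forall>x\<in>{0..1}. 0 < f x"
  shows "(\<lambda>x. fpow f a x * fpow f b x) = fpow f (a + b)"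
  using assms by (auto simp: fpow_def fun_eq_iff powr_add)

lemma inj_on_fpow:
  assumes pos: "\<forall>x\<in>{0..1}. 0 < f x" and nonconst: "\<exists>a\<in>{0..1}. \<exists>b\<in>{0..1}. f a \<noteq> f b"
  shows "inj_on (fpow f) {0<..}"
proof (rule inj_onI, rule ccontr)
  fix a b :: real
  assume "a \<in> {0<..}" "b \<in> {0<..}" and eq: "fpow f a = fpow f b" and "a \<noteq> b"
  have "f x = 1" if x: "x \<in> {0..1}" for x
  proof -
    have "f x powr a = f x powr b"
      using fun_cong[OF eq, of x] x by (simp add: fpow_def)
    then have "a * ln (f x) = b * ln (f x)"
      using pos x by (metis ln_powr)
    then show ?thesis
      using \<open>a \<noteq> b\<close> pos x by simp
  qed
  then show False
    using nonconst by force
qed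

lemma fpow_combination_eq_powr_sum:
  assumes inj: "inj_on (fpow f) {0<..}" and T: "finite T" "T \<subseteq> fpow f ` {0<..}"
  obtains S c where "finite S" "S \<subseteq> {0<..}"
    and "\<And>x. x \<in> {0..1} \<Longrightarrow> (\<Sum>v\<in>T. fscale (u v) v) x = powr_sum c id S (f x)"
    and "(\<exists>v\<in>T. u v \<noteq> 0) \<Longrightarrow> \<exists>l\<in>S. c l \<noteq> 0"
proof
  define S where "S = {l \<in> {0<..}. fpow f l \<in> T}"
  have T_eq: "T = fpow f ` S"
    using T(2) unfolding S_def by auto
  have inj_S: "inj_on (fpow f) S"
    using inj by (rule inj_on_subset) (auto simp: S_def)
  show "finite S"
    using T(1) finite_imageD inj_S T_eq by blast
  show "S \<subseteq> {0<..}"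
    by (auto simp: S_def)
  show "(\<Sum>v\<in>T. fscale (u v) v) x = powr_sum (u \<circ> fpow f) id S (f x)" if "x \<in> {0..1}" for x
  proof -
    have "(\<Sum>v\<in>T. fscale (u v) v) x = (\<Sum>l\<in>S. u (fpow f l) * fpow f l x)"
      unfolding T_eq by (simp add: sum_fun_apply fscale_def sum.reindex[OF inj_S])
    then show ?thesis
      using that by (simp add: powr_sum_def fpow_def)
  qed
  show "\<exists>l\<in>S. (u \<circ> fpow f) l \<noteq> 0" if "\<exists>v\<in>T. u v \<noteq> 0"
    using that unfolding T_eq by auto
qed

lemma eventually_in_image_midpoint:
  fixes f :: "'a::topological_space \<Rightarrow> real"
  assumes "connected S" "continuous_on S f" "a \<in> S" "b \<in> S" "f a < f b"
  shows "eventually (\<lambda>t. t \<in> f ` S) (at ((f a + f b) / 2))"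
proof -
  have "{f a..f b} \<subseteq> f ` S"
    using assms by (intro connected_contains_Icc connected_continuous_image) auto
  moreover have "eventually (\<lambda>t. t \<in> {f a<..<f b}) (at ((f a + f b) / 2))"
    using assms(5) by (intro eventually_at_in_open') auto
  ultimately show ?thesis
    by (auto elim!: eventually_mono)
qed

lemma fpow_independent:
  assumes cont: "continuous_on {0..1} f" and pos: "\<forall>x\<in>{0..1}. 0 < f x"
    and nonconst: "\<exists>a\<in>{0..1}. \<exists>b\<in>{0..1}. f a \<noteq> f b"
  shows "\<not> fun_space.dependent (fpow f ` {0<..})"
proof
  assume "fun_space.dependent (fpow f ` {0<..})"
  then obtain T u where T: "finite T" "T \<subseteq> fpow f ` {0<..}"
    and zero: "(\<Sum>v\<in>T. fscale (u v) v) = 0" and nontrivial: "\<exists>v\<in>T. u v \<noteq> 0"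
    unfolding fun_space.dependent_explicit by blast
  obtain S c where "finite S" "S \<subseteq> {0<..}"
    and rep: "\<And>x. x \<in> {0..1} \<Longrightarrow> (\<Sum>v\<in>T. fscale (u v) v) x = powr_sum c id S (f x)"
    and "(\<exists>v\<in>T. u v \<noteq> 0) \<Longrightarrow> \<exists>l\<in>S. c l \<noteq> 0"
    using fpow_combination_eq_powr_sum[OF inj_on_fpow[OF pos nonconst] T, where u = u] by blast
  with nontrivial have "\<exists>l\<in>S. c l \<noteq> 0"
    by blast
  have vanish: "powr_sum c id S (f x) = 0" if "x \<in> {0..1}" for x
    using rep[OF that] zero by simp
  obtain a b where ab: "a \<in> {0..1}" "b \<in> {0..1}" "f a < f b"
    using nonconst by (metis linorder_neqE_linordered_idom)
  define t0 where "t0 = (f a + f b) / 2"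
  have "t0 > 0"
    using pos ab(1,2) unfolding t0_def by (simp add: add_pos_pos)
  have "eventually (\<lambda>t. t \<in> f ` {0..1}) (at t0)"
    unfolding t0_def using cont ab by (intro eventually_in_image_midpoint) auto
  then have "eventually (\<lambda>t. powr_sum c id S t = 0) (at t0)"
    by eventually_elim (use vanish in blast)
  then show False
    using powr_sum_not_eventually_zero[OF \<open>finite S\<close> \<open>\<exists>l\<in>S. c l \<noteq> 0\<close> \<open>t0 > 0\<close>] by blast
qed

lemma fpow_image_eqpoll_UNIV:
  assumes "inj_on (fpow f) {0<..}"
  shows "fpow f ` {0<..} \<approx> (UNIV :: real set)"
proof -
  have "bij_betw ln {0<..} (UNIV :: real set)"
    by (rule bij_betwI[where g = exp]) auto
  then have "{0::real<..} \<approx> (UNIV :: real set)"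
    unfolding eqpoll_def by blast
  then show ?thesis
    using assms by (simp add: inj_on_image_eqpoll_1)
qed

section \<open>One-sided Hoelder bounds\<close>

lemma Limsup_holder_quotient_finite:
  fixes g :: "real \<Rightarrow> real"
  assumes "eventually (\<lambda>y. \<bar>g y - g x0\<bar> \<le> M * \<bar>y - x0\<bar> powr \<alpha>) (at x0 within T)"
  shows "Limsup (at x0 within T) (\<lambda>y. ereal (\<bar>g y - g x0\<bar> / \<bar>y - x0\<bar> powr \<alpha>)) < \<infinity>"
proof -
  have "eventually (\<lambda>y. ereal (\<bar>g y - g x0\<bar> / \<bar>y - x0\<bar> powr \<alpha>) \<le> ereal M) (at x0 within T)"
    using assms eventually_neq_at_within[of x0 x0 T]
    by eventually_elim (simp add: divide_le_eq)
  then have "Limsup (at x0 within T) (\<lambda>y. ereal (\<bar>g y - g x0\<bar> / \<bar>y - x0\<bar> powr \<alpha>)) \<le> ereal M"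
    by (rule Limsup_bounded)
  then show ?thesis
    using order.strict_trans1 by fastforce
qed

lemma completely_non_holder_nonconstant:
  assumes "completely_non_holder f"
  shows "\<exists>a\<in>{0..1}. \<exists>b\<in>{0..1}. f a \<noteq> f b"
proof (rule ccontr)
  assume "\<not> ?thesis"
  then have "eventually (\<lambda>y. \<bar>f y - f 0\<bar> \<le> 0 * \<bar>y - 0\<bar> powr 1) (at 0 within {0<..1})"
    by (auto simp: eventually_at_filter)
  then have "holder_right 1 f 0"
    unfolding holder_right_def by (rule Limsup_holder_quotient_finite)
  then show False
    using assms unfolding completely_non_holder_def by force
qed

lemma has_real_derivative_imp_eventually_lipschitz:
  fixes g :: "real \<Rightarrow> real"
  assumes "(g has_real_derivative D) (at x0 within T)"
  shows "eventually (\<lambda>y. \<bar>g y - g x0\<bar> \<le> (\<bar>D\<bar> + 1) * \<bar>y - x0\<bar>) (at x0 within T)"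
proof -
  have "((\<lambda>y. \<bar>(g y - g x0) / (y - x0)\<bar>) \<longlongrightarrow> \<bar>D\<bar>) (at x0 within T)"
    using assms by (intro tendsto_rabs) (simp add: has_field_derivative_iff)
  then have "eventually (\<lambda>y. \<bar>(g y - g x0) / (y - x0)\<bar> < \<bar>D\<bar> + 1) (at x0 within T)"
    by (rule order_tendstoD) simp
  then show ?thesis
    using eventually_neq_at_within[of x0 x0 T]
    by eventually_elim (simp add: abs_divide divide_less_eq)
qed

lemma holder_of_lipschitz_composition:
  fixes f P :: "real \<Rightarrow> real" and n :: nat
  assumes f_lim: "(f \<longlongrightarrow> f x0) F"
    and growth: "eventually (\<lambda>t. C * \<bar>t - f x0\<bar>^n \<le> \<bar>P t - P (f x0)\<bar>) (nhds (f x0))"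
    and lip: "eventually (\<lambda>y. \<bar>P (f y) - P (f x0)\<bar> \<le> K * \<bar>y - x0\<bar>) F"
    and "C > 0" "n > 0"
  shows "eventually (\<lambda>y. \<bar>f y - f x0\<bar> \<le> (max K 0 / C) powr (1 / n) * \<bar>y - x0\<bar> powr (1 / n)) F"
proof -
  have "eventually (\<lambda>y. C * \<bar>f y - f x0\<bar>^n \<le> \<bar>P (f y) - P (f x0)\<bar>) F"
    using f_lim growth by (rule filterlim_iff[THEN iffD1, rule_format])
  then show ?thesis
    using lip
  proof eventually_elim
    case (elim y)
    define u where "u = \<bar>f y - f x0\<bar>"
    have "C * u^n \<le> max K 0 * \<bar>y - x0\<bar>"
      using elim unfolding u_def by (smt (verit) abs_ge_zero mult_right_mono)
    then have "u^n \<le> max K 0 / C * \<bar>y - x0\<bar>"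
      using \<open>C > 0\<close> by (simp add: field_simps)
    have "u = (u^n) powr (1 / n)"
      using \<open>n > 0\<close> unfolding u_def by (simp add: powr_inverse_root real_root_power_cancel)
    also have "\<dots> \<le> (max K 0 / C * \<bar>y - x0\<bar>) powr (1 / n)"
      using \<open>u^n \<le> max K 0 / C * \<bar>y - x0\<bar>\<close> by (intro powr_mono2) (simp_all add: u_def)
    also have "\<dots> = (max K 0 / C) powr (1 / n) * \<bar>y - x0\<bar> powr (1 / n)"
      by (rule powr_mult)
    finally show ?case
      unfolding u_def .
  qed
qed

lemma fpow_span_eq_powr_sum:
  assumes "inj_on (fpow f) {0<..}" and "g \<in> fun_space.span (fpow f ` {0<..})"
  obtains S c where "finite S" "S \<subseteq> {0<..}" "\<And>x. x \<in> {0..1} \<Longrightarrow> g x = powr_sum c id S (f x)"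
proof -
  obtain T u where "finite T" "T \<subseteq> fpow f ` {0<..}" and g: "g = (\<Sum>v\<in>T. fscale (u v) v)"
    using assms(2) unfolding fun_space.span_explicit by blast
  then show thesis
    using fpow_combination_eq_powr_sum[OF assms(1), of T u] that by metis
qed

lemma one_sided_derivative_imp_holder:
  fixes f g :: "real \<Rightarrow> real"
  assumes cont: "continuous_on {0..1} f" and pos: "\<forall>x\<in>{0..1}. 0 < f x"
    and S: "finite S" "S \<subseteq> {0<..}"
    and rep: "\<And>x. x \<in> {0..1} \<Longrightarrow> g x = powr_sum c id S (f x)"
    and nonzero: "\<exists>x\<in>{0..1}. g x \<noteq> 0"
    and x0: "x0 \<in> {0..1}" and T: "T \<subseteq> {0..1}"
    and deriv: "(g has_real_derivative D) (at x0 within T)"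
  shows "\<exists>\<alpha>>0. Limsup (at x0 within T) (\<lambda>y. ereal (\<bar>f y - f x0\<bar> / \<bar>y - x0\<bar> powr \<alpha>)) < \<infinity>"
proof -
  define P where "P = powr_sum c id S"
  have "\<exists>l\<in>S. c l \<noteq> 0"
  proof (rule ccontr)
    assume "\<not> ?thesis"
    then have "powr_sum c id S = (\<lambda>t. 0)"
      by (simp add: powr_sum_def)
    then show False
      using nonzero rep by simp
  qed
  moreover have "f x0 > 0"
    using pos x0 by blast
  ultimately obtain n C where "n > 0" "C > 0"
    and growth: "eventually (\<lambda>t. C * \<bar>t - f x0\<bar>^n \<le> \<bar>P t - P (f x0)\<bar>) (nhds (f x0))"
    using powr_sum_deviation_lower_bound[OF S] unfolding P_def by blast
  have f_lim: "(f \<longlongrightarrow> f x0) (at x0 within T)"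
    using cont x0 T unfolding continuous_on_def by (blast intro: tendsto_within_subset)
  have "eventually (\<lambda>y. y \<in> T) (at x0 within T)"
    by (simp add: eventually_at_filter)
  then have "eventually (\<lambda>y. \<bar>P (f y) - P (f x0)\<bar> \<le> (\<bar>D\<bar> + 1) * \<bar>y - x0\<bar>) (at x0 within T)"
    using has_real_derivative_imp_eventually_lipschitz[OF deriv]
    by eventually_elim (use rep x0 T in \<open>auto simp: P_def\<close>)
  then have "eventually (\<lambda>y. \<bar>f y - f x0\<bar> \<le> (max (\<bar>D\<bar> + 1) 0 / C) powr (1 / n) * \<bar>y - x0\<bar> powr (1 / n))
      (at x0 within T)"
    by (rule holder_of_lipschitz_composition[OF f_lim growth _ \<open>C > 0\<close> \<open>n > 0\<close>])
  then show ?thesis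
    using \<open>n > 0\<close> by (intro exI[of _ "1 / n"] conjI Limsup_holder_quotient_finite) auto
qed

lemma gen_algebra_fpow_eq_span:
  assumes "\<forall>x\<in>{0..1}. 0 < f x"
  shows "gen_algebra {fpow f l | l. l > 0} = fun_space.span (fpow f ` {0<..})"
proof -
  have "{fpow f l | l. l > 0} = fpow f ` {0<..}"
    by auto
  moreover have "gen_algebra (fpow f ` {0<..}) = fun_space.span (fpow f ` {0<..})"
    using fpow_mult[OF assms] by (intro gen_algebra_eq_span) auto
  ultimately show ?thesis
    by simp
qed

lemma fpow_span_no_one_sided_derivative:
  assumes cont: "continuous_on {0..1} f" and pos: "\<forall>x\<in>{0..1}. 0 < f x"
    and cnh: "completely_non_holder f"
    and g: "g \<in> fun_space.span (fpow f ` {0<..})" and nonzero: "\<exists>x\<in>{0..1}. g x \<noteq> 0"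
  shows "x0 \<in> {0..<1} \<Longrightarrow> \<not> (g has_real_derivative D) (at x0 within {x0..1})"
    and "x0 \<in> {0<..1} \<Longrightarrow> \<not> (g has_real_derivative D) (at x0 within {0..x0})"
proof -
  obtain S c where S: "finite S" "S \<subseteq> {0<..}" and rep: "\<And>x. x \<in> {0..1} \<Longrightarrow> g x = powr_sum c id S (f x)"
    using fpow_span_eq_powr_sum[OF inj_on_fpow[OF pos completely_non_holder_nonconstant[OF cnh]] g] by blast
  note holder = one_sided_derivative_imp_holder[OF cont pos S rep nonzero]
  \<comment> \<open>The one-sided filters do not see x0 itself, so the closed intervals may be replaced by the
    half-open ones of the definition.\<close>
  have "at x0 within {x0..1} = at x0 within {x0<..1}" "at x0 within {0..x0} = at x0 within {0..<x0}"
    by (auto intro: at_within_nhd[of _ UNIV])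
  then show "x0 \<in> {0..<1} \<Longrightarrow> \<not> (g has_real_derivative D) (at x0 within {x0..1})"
    and "x0 \<in> {0<..1} \<Longrightarrow> \<not> (g has_real_derivative D) (at x0 within {0..x0})"
    using holder[of x0 "{x0..1}" D] holder[of x0 "{0..x0}" D] cnh
    unfolding completely_non_holder_def holder_right_def holder_left_def by auto
qed

theorem mainTheorem2:
  fixes f :: "real \<Rightarrow> real"
  assumes cont: "continuous_on {0..1} f"
    and pos: "\<forall>x\<in>{0..1}. 0 < f x"
    and cnh: "completely_non_holder f"
  defines "\<A> \<equiv> gen_algebra {fpow f l | l. l > 0}"
  shows "(\<exists>B \<subseteq> \<A>. \<not> module.dependent fscale B \<and> module.span fscale B = \<A>
              \<and> B \<approx> (UNIV :: real set))
       \<and> (\<forall>g\<in>\<A>. (\<exists>x\<in>{0..1}. g x \<noteq> 0) \<longrightarrow>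
           \<not> (\<exists>x0 D. (x0 \<in> {0..<1} \<and> (g has_real_derivative D) (at x0 within {x0..1}))
                    \<or> (x0 \<in> {0<..1} \<and> (g has_real_derivative D) (at x0 within {0..x0}))))"
proof (intro conjI ballI impI)
  have nonconst: "\<exists>a\<in>{0..1}. \<exists>b\<in>{0..1}. f a \<noteq> f b"
    using cnh by (rule completely_non_holder_nonconstant)
  have A_eq: "\<A> = fun_space.span (fpow f ` {0<..})"
    unfolding \<A>_def using pos by (rule gen_algebra_fpow_eq_span)
  show "\<exists>B \<subseteq> \<A>. \<not> fun_space.dependent B \<and> fun_space.span B = \<A> \<and> B \<approx> (UNIV :: real set)"
    using fpow_independent[OF cont pos nonconst] fpow_image_eqpoll_UNIV[OF inj_on_fpow[OF pos nonconst]]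
      fun_space.span_superset A_eq by blast
  fix g
  assume "g \<in> \<A>" and "\<exists>x\<in>{0..1}. g x \<noteq> 0"
  then show "\<not> (\<exists>x0 D. (x0 \<in> {0..<1} \<and> (g has_real_derivative D) (at x0 within {x0..1}))
                    \<or> (x0 \<in> {0<..1} \<and> (g has_real_derivative D) (at x0 within {0..x0})))"
    using fpow_span_no_one_sided_derivative[OF cont pos cnh] A_eq by blast
qed

end
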